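(* Let $k\geq 2$ and let $G\subseteq V_{n-3}$ be a $(2k-2)$-set with property $P_{n-3}$. Then $F=G\cup\{n-2,n-1,n\}$ is a facet of $B^{2k,k-1}_n$.
   Context: $V_n=\{\pm1,\dots,\pm n\}$; $-X$ denotes the image of $X$ under $v\mapsto -v$. For pure complexes $\Gamma\subseteq\Delta$ of the same dimension, $\Delta\setminus\Gamma$ is the subcomplex generated by the facets of $\Delta$ not facets of $\Gamma$. $\overline{W}$ is the simplex on $W$, $*$ is the join, $\Delta*v=\Delta*\overline{\{v\}}$. The complexes $\Delta^d_n$ and $B^{d,i}_n$ are defined recursively: $\Delta^1_n$ is the cycle $(1,2,\dots,n,-1,\dots,-n,1)$; $\Delta^d_{d+1}$ is the boundary complex of the $(d+1)$-cross-polytope on $V_{d+1}$; $B^{d,j}_n=\emptyset$ for $j<0$; $B^{1,0}_n=\overline{\{-1,n\}}$; for $d=2k$, $n\geq 2k$: $B^{2k-1,k}_n=\Delta^{2k-1}_n\setminus B^{2k-1,k-1}_n$; for $n\geq d+1$, $i\leq\lfloor d/2\rfloor$: $B^{d,i}_n=(B^{d-1,i}_{n-1}*n)\cup((-B^{d-1,i-1}_{n-1})*(-n))$; $\Delta^d_{n+1}$ is obtained from $\Delta^d_n$ by replacing $B^{d,\lceil d/2\rceil-1}_n$ with $\partial B^{d,\lceil d/2\rceil-1}_n*(n+1)$ and $-B^{d,\lceil d/2\rceil-1}_n$ with $\partial(-B^{d,\lceil d/2\rceil-1}_n)*(-n-1)$. A $2j$-set $G=\{p_1,\dots,p_{2j}\}\subseteq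 V_N$ has property $P_N$ if $1\leq|p_1|<\dots<|p_{2j}|\leq N$, $p_{2i-1},p_{2i}$ have the same sign for all $i$, $|p_2|-|p_1|=1$, and $|p_{2i}|-|p_{2i-1}|=2$ for $2\leq i\leq j$. *)

theory Defs
  imports Main
begin

text \<open>Simplicial complexes on vertex set int, represented as sets of faces
  (finite vertex sets, downward closed). The empty set of faces is the void complex.\<close>

definition Vn :: "nat \<Rightarrow> int set" where
  "Vn n = {v. v \<noteq> 0 \<and> \<bar>v\<bar> \<le> int n}"

definition negc :: "int set set \<Rightarrow> int set set" where
  "negc K = (\<lambda>\<sigma>. uminus ` \<sigma>) ` K"

definition simplex :: "int set \<Rightarrow> int set set" where
  "simplex W = Pow W"

definition join :: "int set set \<Rightarrow> int set set \<Rightarrow> int set set" where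
  "join K L = {\<sigma> \<union> \<tau> | \<sigma> \<tau>. \<sigma> \<in> K \<and> \<tau> \<in> L}"

definition facets :: "int set set \<Rightarrow> int set set" where
  "facets K = {\<sigma> \<in> K. \<forall>\<tau>\<in>K. \<sigma> \<subseteq> \<tau> \<longrightarrow> \<tau> = \<sigma>}"

definition generated :: "int set set \<Rightarrow> int set set" where
  "generated F = {\<sigma>. \<exists>\<tau>\<in>F. \<sigma> \<subseteq> \<tau>}"

definition diffc :: "int set set \<Rightarrow> int set set \<Rightarrow> int set set" where
  "diffc D G = generated (facets D - facets G)"

text \<open>Boundary of a pure complex (ball): generated by the ridges lying in exactly one facet.\<close>
definition bd :: "int set set \<Rightarrow> int set set" where
  "bd K = generated {R. card {F \<in> facets K. R \<subseteq> F \<and> card F = card R + 1} = 1}"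

text \<open>The cycle (1,2,...,n,-1,...,-n,1).\<close>
definition cycle :: "nat \<Rightarrow> int set set" where
  "cycle n = generated
     ({{int i, int i + 1} | i. 1 \<le> i \<and> i < n} \<union> {{- int i, - int i - 1} | i. 1 \<le> i \<and> i < n}
      \<union> {{int n, -1}, {- int n, 1}})"

text \<open>Boundary complex of the m-cross-polytope on V_m.\<close>
definition crossbd :: "nat \<Rightarrow> int set set" where
  "crossbd m = {\<sigma>. \<sigma> \<subseteq> Vn m \<and> (\<forall>v\<in>\<sigma>. - v \<notin> \<sigma>)}"

definition replace :: "int set set \<Rightarrow> int set set \<Rightarrow> nat \<Rightarrow> int set set" where
  "replace D B m = diffc (diffc D B) (negc B)
      \<union> join (bd B) (simplex {int m + 1})
      \<union> join (bd (negc B)) (simplex {- (int m + 1)})"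

function Delta :: "nat \<Rightarrow> nat \<Rightarrow> int set set"
  and Bc :: "nat \<Rightarrow> int \<Rightarrow> nat \<Rightarrow> int set set" where
  "Delta d n =
     (if d = 0 \<or> n < d + 1 then {}
      else if d = 1 then cycle n
      else if n = d + 1 then crossbd (d + 1)
      else replace (Delta d (n - 1)) (Bc d (int ((d + 1) div 2) - 1) (n - 1)) (n - 1))"
| "Bc d i n =
     (if i < 0 \<or> d = 0 \<or> n < d + 1 then {}
      else if d = 1 \<and> i = 0 then simplex {-1, int n}
      else if odd d \<and> i = int ((d + 1) div 2) then diffc (Delta d n) (Bc d (i - 1) n)
      else if 2 \<le> d \<and> i \<le> int (d div 2) then
        join (Bc (d - 1) i (n - 1)) (simplex {int n})
        \<union> join (negc (Bc (d - 1) (i - 1) (n - 1))) (simplex {- int n})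
      else {})"
  by pat_completeness auto
termination
  by (relation "measures
     [\<lambda>x. case x of Inl (d, n) \<Rightarrow> d | Inr (d, i, n) \<Rightarrow> d,
      \<lambda>x. case x of Inl (d, n) \<Rightarrow> n | Inr (d, i, n) \<Rightarrow> n,
      \<lambda>x. case x of Inl (d, n) \<Rightarrow> 0
         | Inr (d, i, n) \<Rightarrow> (if odd d \<and> i = int ((d + 1) div 2) then 1 else 0)]") auto

definition propP :: "nat \<Rightarrow> int set \<Rightarrow> bool" where
  "propP N G \<longleftrightarrow> (\<exists>(j::nat) (p::nat \<Rightarrow> int).
      G = p ` {1..2*j} \<and>
      1 \<le> \<bar>p 1\<bar> \<and> (\<forall>i\<in>{1..<2*j}. \<bar>p i\<bar> < \<bar>p (Suc i)\<bar>) \<and> \<bar>p (2*j)\<bar> \<le> int N \<and>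
      (\<forall>i\<in>{1..j}. sgn (p (2*i - 1)) = sgn (p (2*i))) \<and>
      \<bar>p 2\<bar> - \<bar>p 1\<bar> = 1 \<and>
      (\<forall>i\<in>{2..j}. \<bar>p (2*i)\<bar> - \<bar>p (2*i - 1)\<bar> = 2))"

end

theory Submission
  imports Defs
begin

text \<open>
  A 2j-set G with property P_N is a face of \<Delta>^(2j-1)_N, by induction on j and N.
  Passing from \<Delta>_M to \<Delta>_(M+1), either G \<subseteq> V_M is already a facet of \<Delta>_M avoiding
  \<plusminus>B^(2j-1,j-1)_M and survives the replacement, or G = H \<union> {\<plusminus>(M-1), \<plusminus>(M+1)} and
  H \<union> {\<plusminus>(M-1)} is a boundary ridge of \<plusminus>B^(2j-1,j-1)_M whose only facet is
  H \<union> {\<plusminus>(M-1), \<plusminus>M}. Both steps rest on one obstruction: every facet of B^(2j-1,i)_M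
  with i \<le> j-1 has vertices of absolute values M and M-1, which a P-set with at least four
  elements never has. So G is a facet of \<Delta>^(2j-1)_N outside B^(2j-1,j-1)_N, hence a facet
  of B^(2j-1,j)_N; coning successively with N+1, N+2, N+3, each a cone step in the recursion
  for B, yields the facet G \<union> {N+1, N+2, N+3} of B^(2j+2,j)_(N+3).
\<close>

declare Delta.simps[simp del] Bc.simps[simp del]

section \<open>Negation and boundaries of complexes\<close>

lemma uminus_image_uminus_image [simp]: "uminus ` uminus ` (A :: int set) = A"
  by (simp add: image_image)

lemma mem_negc: "\<sigma> \<in> negc K \<longleftrightarrow> uminus ` \<sigma> \<in> K"
proof
  assume "\<sigma> \<in> negc K"
  then show "uminus ` \<sigma> \<in> K" unfolding negc_def by auto
next
  assume "uminus ` \<sigma> \<in> K"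
  then have "uminus ` uminus ` \<sigma> \<in> negc K" unfolding negc_def by blast
  then show "\<sigma> \<in> negc K" by simp
qed

lemma negc_negc [simp]: "negc (negc K) = K"
  unfolding negc_def by (simp add: image_image)

lemma negc_mono: "K \<subseteq> L \<Longrightarrow> negc K \<subseteq> negc L"
  unfolding negc_def by blast

lemma card_uminus_image [simp]: "card (uminus ` (\<sigma> :: int set)) = card \<sigma>"
  by (simp add: card_image)

lemma uminus_image_subset_Vn_iff [simp]: "uminus ` \<sigma> \<subseteq> Vn n \<longleftrightarrow> \<sigma> \<subseteq> Vn n"
  unfolding Vn_def by auto

lemma Vn_mono: "m \<le> n \<Longrightarrow> Vn m \<subseteq> Vn n"
  unfolding Vn_def by auto

lemma finite_Vn: "finite (Vn n)"
  unfolding Vn_def by (rule finite_subset[of _ "{-int n..int n}"]) auto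

lemma notin_Vn: "\<sigma> \<subseteq> Vn m \<Longrightarrow> int m < \<bar>v\<bar> \<Longrightarrow> v \<notin> \<sigma>"
  unfolding Vn_def by auto

lemma uminus_image_subset_iff [simp]: "uminus ` A \<subseteq> uminus ` B \<longleftrightarrow> A \<subseteq> (B :: int set)"
  by auto

lemma mem_join_simplex:
  "\<sigma> \<in> join K (simplex {v}) \<longleftrightarrow> \<sigma> \<in> K \<or> (\<exists>\<rho>\<in>K. \<sigma> = insert v \<rho>)"
  unfolding join_def simplex_def by (auto simp: subset_singleton_iff)

lemma subset_generated: "S \<subseteq> generated S"
  unfolding generated_def by blast

lemma facets_subset: "facets K \<subseteq> K"
  unfolding facets_def by auto

lemma facet_diffc:
  assumes "\<sigma> \<in> facets D" "\<sigma> \<notin> facets E"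
  shows "\<sigma> \<in> facets (diffc D E)"
proof -
  have "\<tau> = \<sigma>" if \<tau>: "\<tau> \<in> diffc D E" "\<sigma> \<subseteq> \<tau>" for \<tau>
  proof -
    obtain \<rho> where "\<rho> \<in> facets D" "\<tau> \<subseteq> \<rho>"
      using \<tau>(1) unfolding diffc_def generated_def by blast
    then show ?thesis
      using assms(1) \<tau>(2) unfolding facets_def by blast
  qed
  moreover have "\<sigma> \<in> diffc D E"
    using assms unfolding diffc_def generated_def by blast
  ultimately show ?thesis
    unfolding facets_def by blast
qed

lemma negc_facets_subset: "negc (facets K) \<subseteq> facets (negc K)"
proof
  fix \<sigma> assume "\<sigma> \<in> negc (facets K)"
  then have "uminus ` \<sigma> \<in> facets K"
    by (simp only: mem_negc)
  then have \<sigma>: "uminus ` \<sigma> \<in> K" "\<And>\<tau>. \<tau> \<in> K \<Longrightarrow> uminus ` \<sigma> \<subseteq> \<tau> \<Longrightarrow> \<tau> = uminus ` \<sigma>"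
    unfolding facets_def by blast+
  have "\<tau> = \<sigma>" if "\<tau> \<in> negc K" "\<sigma> \<subseteq> \<tau>" for \<tau>
  proof -
    have "uminus ` \<tau> = uminus ` \<sigma>"
      using \<sigma>(2)[of "uminus ` \<tau>"] that unfolding mem_negc by simp
    then show ?thesis
      by (simp add: inj_image_eq_iff)
  qed
  moreover have "\<sigma> \<in> negc K"
    using \<sigma>(1) by (simp only: mem_negc)
  ultimately show "\<sigma> \<in> facets (negc K)"
    unfolding facets_def by blast
qed

lemma facets_negc: "facets (negc K) = negc (facets K)"
proof
  have "facets (negc K) = negc (negc (facets (negc K)))" by simp
  also have "\<dots> \<subseteq> negc (facets K)"
    using negc_mono[OF negc_facets_subset[of "negc K"]] by simp
  finally show "facets (negc K) \<subseteq> negc (facets K)" .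
qed (rule negc_facets_subset)

lemma uminus_image_subset_swap: "uminus ` A \<subseteq> B \<longleftrightarrow> A \<subseteq> uminus ` (B :: int set)"
  by force

lemma card_negc [simp]: "card (negc K) = card K"
  unfolding negc_def by (rule card_image) (simp add: inj_on_def inj_image_eq_iff)

lemma negc_Collect: "negc {F \<in> K. P F} = {F \<in> negc K. P (uminus ` F)}"
  by (simp add: set_eq_iff mem_negc)

lemma negc_bd_subset: "negc (bd K) \<subseteq> bd (negc K)"
proof
  fix \<sigma> assume "\<sigma> \<in> negc (bd K)"
  then have "uminus ` \<sigma> \<in> bd K"
    by (simp only: mem_negc)
  then obtain R where R: "uminus ` \<sigma> \<subseteq> R" "card {F \<in> facets K. R \<subseteq> F \<and> card F = card R + 1} = 1"
    unfolding bd_def generated_def by auto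
  have "uminus ` R \<subseteq> F \<longleftrightarrow> R \<subseteq> uminus ` F" for F
    by (rule uminus_image_subset_swap)
  then have "{F \<in> facets (negc K). uminus ` R \<subseteq> F \<and> card F = card (uminus ` R) + 1}
      = negc {F \<in> facets K. R \<subseteq> F \<and> card F = card R + 1}"
    unfolding facets_negc negc_Collect by simp
  then have "uminus ` R \<in> {R. card {F \<in> facets (negc K). R \<subseteq> F \<and> card F = card R + 1} = 1}"
    using R(2) by simp
  moreover have "\<sigma> \<subseteq> uminus ` R"
    using R(1) unfolding uminus_image_subset_swap .
  ultimately show "\<sigma> \<in> bd (negc K)"
    unfolding bd_def generated_def by blast
qed

lemma bd_negc: "bd (negc K) = negc (bd K)"
proof
  have "bd (negc K) = negc (negc (bd (negc K)))" by simp
  also have "\<dots> \<subseteq> negc (bd K)"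
    using negc_mono[OF negc_bd_subset[of "negc K"]] by simp
  finally show "bd (negc K) \<subseteq> negc (bd K)" .
qed (rule negc_bd_subset)

lemma ridge_in_bd:
  assumes "X \<in> facets K" "R \<subseteq> X" "card X = card R + 1"
    and "\<And>F. F \<in> facets K \<Longrightarrow> R \<subseteq> F \<Longrightarrow> card F = card R + 1 \<Longrightarrow> F = X"
  shows "R \<in> bd K"
proof -
  have "F \<in> {F \<in> facets K. R \<subseteq> F \<and> card F = card R + 1} \<longleftrightarrow> F \<in> {X}" for F
  proof
    assume "F \<in> {F \<in> facets K. R \<subseteq> F \<and> card F = card R + 1}"
    then show "F \<in> {X}" using assms(4) by simp
  qed (use assms(1-3) in simp)
  then have "{F \<in> facets K. R \<subseteq> F \<and> card F = card R + 1} = {X}"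
    by (rule set_eqI)
  then have "card {F \<in> facets K. R \<subseteq> F \<and> card F = card R + 1} = 1"
    by simp
  then show ?thesis
    unfolding bd_def by (intro subsetD[OF subset_generated] CollectI)
qed

lemma facet_in_replace:
  assumes "\<sigma> \<in> facets D" "\<sigma> \<notin> B" "uminus ` \<sigma> \<notin> B"
  shows "\<sigma> \<in> replace D B m"
proof -
  have "\<sigma> \<notin> negc B"
    using assms(3) by (simp add: mem_negc)
  then have "\<sigma> \<notin> facets B" "\<sigma> \<notin> facets (negc B)"
    using assms(2) facets_subset by blast+
  then have "\<sigma> \<in> facets (diffc (diffc D B) (negc B))"
    using assms(1) by (intro facet_diffc)
  then show ?thesis
    unfolding replace_def using facets_subset by blast
qed

lemma cone_in_replace:
  assumes "R \<in> bd B"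
  shows "insert (int m + 1) R \<in> replace D B m"
proof -
  have "insert (int m + 1) R \<in> join (bd B) (simplex {int m + 1})"
    using assms unfolding mem_join_simplex by blast
  then show ?thesis
    unfolding replace_def by blast
qed

lemma neg_cone_in_replace:
  assumes "uminus ` R \<in> bd B"
  shows "insert (- (int m + 1)) R \<in> replace D B m"
proof -
  have "R \<in> bd (negc B)"
    using assms by (simp add: bd_negc mem_negc)
  then have "insert (- (int m + 1)) R \<in> join (bd (negc B)) (simplex {- (int m + 1)})"
    unfolding mem_join_simplex by blast
  then show ?thesis
    unfolding replace_def by blast
qed

section \<open>Dimension bounds\<close>

definition bounded_complex :: "nat \<Rightarrow> nat \<Rightarrow> int set set \<Rightarrow> bool" where
  "bounded_complex d n K \<longleftrightarrow> (\<forall>\<sigma>\<in>K. finite \<sigma> \<and> card \<sigma> \<le> Suc d \<and> \<sigma> \<subseteq> Vn n)"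

lemma bounded_complexD:
  "bounded_complex d n K \<Longrightarrow> \<sigma> \<in> K \<Longrightarrow> finite \<sigma> \<and> card \<sigma> \<le> Suc d \<and> \<sigma> \<subseteq> Vn n"
  unfolding bounded_complex_def by blast

lemma bounded_complex_empty: "bounded_complex d n {}"
  unfolding bounded_complex_def by simp

lemma bounded_complex_mono:
  "bounded_complex d m K \<Longrightarrow> m \<le> n \<Longrightarrow> bounded_complex d n K"
  unfolding bounded_complex_def using Vn_mono by blast

lemma bounded_complex_negc:
  assumes "bounded_complex d n K"
  shows "bounded_complex d n (negc K)"
  unfolding bounded_complex_def
proof
  fix \<sigma> assume "\<sigma> \<in> negc K"
  then have "uminus ` \<sigma> \<in> K"
    by (simp only: mem_negc)
  from bounded_complexD[OF assms this] show "finite \<sigma> \<and> card \<sigma> \<le> Suc d \<and> \<sigma> \<subseteq> Vn n"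
    by (simp add: finite_image_iff)
qed

lemma bounded_complex_generated:
  assumes "bounded_complex d n S"
  shows "bounded_complex d n (generated S)"
  unfolding bounded_complex_def
proof
  fix \<sigma> assume "\<sigma> \<in> generated S"
  then obtain \<tau> where "\<tau> \<in> S" "\<sigma> \<subseteq> \<tau>"
    unfolding generated_def by blast
  then show "finite \<sigma> \<and> card \<sigma> \<le> Suc d \<and> \<sigma> \<subseteq> Vn n"
    using bounded_complexD[OF assms] by (meson card_mono finite_subset order_trans)
qed

lemma bounded_complex_diffc: "bounded_complex d n D \<Longrightarrow> bounded_complex d n (diffc D E)"
  unfolding diffc_def
  by (rule bounded_complex_generated) (meson Diff_subset bounded_complex_def facets_subset subsetD)

lemma bounded_complex_Un:
  "bounded_complex d n K \<Longrightarrow> bounded_complex d n L \<Longrightarrow> bounded_complex d n (K \<union> L)"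
  unfolding bounded_complex_def by blast

lemma bounded_complex_simplex:
  assumes "finite W" "card W \<le> Suc d" "W \<subseteq> Vn n"
  shows "bounded_complex d n (simplex W)"
  unfolding bounded_complex_def simplex_def
  using assms by (meson PowD card_mono finite_subset order_trans)

lemma bounded_complex_bd:
  assumes "bounded_complex (Suc d) n K"
  shows "bounded_complex d n (bd K)"
  unfolding bd_def
proof (rule bounded_complex_generated, unfold bounded_complex_def, intro ballI)
  fix R assume "R \<in> {R. card {F \<in> facets K. R \<subseteq> F \<and> card F = card R + 1} = 1}"
  then have "card {F \<in> facets K. R \<subseteq> F \<and> card F = card R + 1} = 1"
    by simp
  then obtain F where "{F \<in> facets K. R \<subseteq> F \<and> card F = card R + 1} = {F}"
    by (rule card_1_singletonE)
  then have "F \<in> {F \<in> facets K. R \<subseteq> F \<and> card F = card R + 1}"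
    by simp
  then have F: "F \<in> K" "R \<subseteq> F" "card F = card R + 1"
    using facets_subset by auto
  with bounded_complexD[OF assms F(1)] show "finite R \<and> card R \<le> Suc d \<and> R \<subseteq> Vn n"
    using finite_subset by fastforce
qed

lemma bounded_complex_join_simplex:
  assumes "bounded_complex d n K" "v \<in> Vn (Suc n)"
  shows "bounded_complex (Suc d) (Suc n) (join K (simplex {v}))"
  unfolding bounded_complex_def
proof
  fix \<sigma> assume "\<sigma> \<in> join K (simplex {v})"
  then obtain \<rho> where "\<rho> \<in> K" "\<sigma> = \<rho> \<or> \<sigma> = insert v \<rho>"
    unfolding mem_join_simplex by blast
  moreover note bounded_complexD[OF assms(1) \<open>\<rho> \<in> K\<close>]
  ultimately show "finite \<sigma> \<and> card \<sigma> \<le> Suc (Suc d) \<and> \<sigma> \<subseteq> Vn (Suc n)"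
    using assms(2) Vn_mono[of n "Suc n"] by (auto simp: card_insert_if)
qed

lemma bounded_complex_replace:
  assumes "bounded_complex (Suc d) m D" "bounded_complex (Suc d) m B"
  shows "bounded_complex (Suc d) (Suc m) (replace D B m)"
proof -
  have "int m + 1 \<in> Vn (Suc m)" "- (int m + 1) \<in> Vn (Suc m)"
    unfolding Vn_def by auto
  moreover have "bounded_complex (Suc d) (Suc m) (diffc (diffc D B) (negc B))"
    using bounded_complex_diffc[OF bounded_complex_diffc[OF assms(1)]]
    by (rule bounded_complex_mono) simp
  ultimately show ?thesis
    unfolding replace_def
    using assms(2) by (metis bounded_complex_Un bounded_complex_join_simplex bounded_complex_bd
        bounded_complex_negc)
qed

lemma bounded_complex_cycle: "1 \<le> n \<Longrightarrow> bounded_complex 1 n (cycle n)"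
  unfolding cycle_def
  by (rule bounded_complex_generated) (auto simp: bounded_complex_def Vn_def card_insert_if)

lemma bounded_complex_crossbd: "bounded_complex d (Suc d) (crossbd (Suc d))"
  unfolding bounded_complex_def
proof
  fix \<sigma> assume "\<sigma> \<in> crossbd (Suc d)"
  then have \<sigma>: "\<sigma> \<subseteq> Vn (Suc d)" "\<And>v. v \<in> \<sigma> \<Longrightarrow> - v \<notin> \<sigma>"
    unfolding crossbd_def by auto
  have "inj_on abs \<sigma>"
  proof (rule inj_onI)
    fix x y assume "x \<in> \<sigma>" "y \<in> \<sigma>" "\<bar>x\<bar> = \<bar>y\<bar>"
    then show "x = y" using \<sigma>(2) by (auto simp: abs_eq_iff)
  qed
  moreover have "abs ` \<sigma> \<subseteq> {1..int (Suc d)}"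
    using \<sigma>(1) unfolding Vn_def by auto
  then have "card (abs ` \<sigma>) \<le> Suc d"
    by (metis card_atLeastAtMost_int card_mono finite_atLeastAtMost_int diff_add_cancel nat_int)
  moreover have "finite \<sigma>"
    using \<sigma>(1) finite_Vn finite_subset by blast
  ultimately show "finite \<sigma> \<and> card \<sigma> \<le> Suc d \<and> \<sigma> \<subseteq> Vn (Suc d)"
    using \<sigma>(1) card_image by fastforce
qed

section \<open>The complexes \<Delta> and B and their full faces\<close>

lemma Delta_1: "2 \<le> n \<Longrightarrow> Delta 1 n = cycle n"
  by (subst Delta.simps) simp

lemma Delta_replace:
  "2 \<le> d \<Longrightarrow> d + 1 < n \<Longrightarrow>
    Delta d n = replace (Delta d (n - 1)) (Bc d (int ((d + 1) div 2) - 1) (n - 1)) (n - 1)"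
  by (subst Delta.simps) simp

lemma Bc_eq_empty: "i < 0 \<or> d = 0 \<or> n < d + 1 \<Longrightarrow> Bc d i n = {}"
  by (subst Bc.simps) auto

lemma Bc_1_0: "2 \<le> n \<Longrightarrow> Bc 1 0 n = simplex {-1, int n}"
  by (subst Bc.simps) simp

lemma Bc_odd_top:
  "odd d \<Longrightarrow> i = int ((d + 1) div 2) \<Longrightarrow> d + 1 \<le> n \<Longrightarrow> Bc d i n = diffc (Delta d n) (Bc d (i - 1) n)"
  by (subst Bc.simps) auto

lemma Bc_cone:
  assumes "2 \<le> d" "0 \<le> i" "i \<le> int (d div 2)" "d + 1 \<le> n"
  shows "Bc d i n = join (Bc (d - 1) i (n - 1)) (simplex {int n})
                  \<union> join (negc (Bc (d - 1) (i - 1) (n - 1))) (simplex {- int n})"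
proof -
  have "\<not> (i < 0 \<or> d = 0 \<or> n < d + 1)" "\<not> (d = 1 \<and> i = 0)"
    "\<not> (odd d \<and> i = int ((d + 1) div 2))" "2 \<le> d \<and> i \<le> int (d div 2)"
    using assms by auto
  then show ?thesis
    by (subst Bc.simps) (simp only: if_not_P if_P if_False)
qed

lemma Bc_eq_empty_high:
  "int (d div 2) < i \<Longrightarrow> \<not> (odd d \<and> i = int ((d + 1) div 2)) \<Longrightarrow> Bc d i n = {}"
  by (subst Bc.simps) auto

lemma bounded_complex_Bc_cone:
  assumes "2 \<le> d" "0 \<le> i" "i \<le> int (d div 2)" "d + 1 \<le> n"
    and "bounded_complex (d - 1) (n - 1) (Bc (d - 1) i (n - 1))"
    and "bounded_complex (d - 1) (n - 1) (Bc (d - 1) (i - 1) (n - 1))"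
  shows "bounded_complex d n (Bc d i n)"
proof -
  have "int n \<in> Vn (Suc (n - 1))" "- int n \<in> Vn (Suc (n - 1))"
    using assms(4) unfolding Vn_def by auto
  then have "bounded_complex (Suc (d - 1)) (Suc (n - 1)) (Bc d i n)"
    unfolding Bc_cone[OF assms(1-4)]
    by (intro bounded_complex_Un bounded_complex_join_simplex bounded_complex_negc assms(5,6))
  then show ?thesis
    using assms(1,4) by simp
qed

lemma bounded_complex_Delta: "bounded_complex d n (Delta d n)"
  and bounded_complex_Bc: "bounded_complex d n (Bc d i n)"
proof (induction d n and d i n rule: Delta_Bc.induct)
  case (1 d n)
  consider "d = 0 \<or> n < d + 1" | "d = 1" "2 \<le> n" | "2 \<le> d" "n = d + 1" | "2 \<le> d" "d + 1 < n"
    by linarith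
  then show ?case
  proof cases
    case 1
    then show ?thesis by (subst Delta.simps) (simp add: bounded_complex_empty)
  next
    case 2
    then show ?thesis using Delta_1[of n] bounded_complex_cycle[of n] by simp
  next
    case 3
    then show ?thesis by (subst Delta.simps) (simp add: bounded_complex_crossbd)
  next
    case 4
    obtain d' m where "d = Suc d'" "n = Suc m"
      using 4 by (cases d; cases n) auto
    with 4 "1.IH" show ?thesis
      by (simp add: Delta_replace bounded_complex_replace)
  qed
next
  case (2 d i n)
  consider "i < 0 \<or> d = 0 \<or> n < d + 1" | "d = 1" "i = 0" "2 \<le> n"
    | "odd d" "i = int ((d + 1) div 2)" "d + 1 \<le> n"
    | "2 \<le> d" "0 \<le> i" "i \<le> int (d div 2)" "d + 1 \<le> n"
    | "int (d div 2) < i" "\<not> (odd d \<and> i = int ((d + 1) div 2))"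
    by linarith
  then show ?case
  proof cases
    case 1
    then show ?thesis by (simp only: Bc_eq_empty bounded_complex_empty)
  next
    case 2
    then show ?thesis
      using Bc_1_0[of n] by (auto intro!: bounded_complex_simplex simp: Vn_def card_insert_if)
  next
    case 3
    then show ?thesis
      using "2.IH"(1) odd_pos by (simp add: Bc_odd_top bounded_complex_diffc)
  next
    case 4
    moreover have "\<not> (odd d \<and> i = int ((d + 1) div 2))"
      using 4(3) by auto
    ultimately show ?thesis
      using "2.IH"(3,4) by (intro bounded_complex_Bc_cone[OF 4]) auto
  next
    case 5
    then show ?thesis by (simp add: Bc_eq_empty_high bounded_complex_empty)
  qed
qed

lemma bounded_complex_face_eq:
  assumes "bounded_complex d n K" "\<tau> \<in> K" "\<sigma> \<subseteq> \<tau>" "card \<sigma> = Suc d"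
  shows "\<tau> = \<sigma>"
  using bounded_complexD[OF assms(1,2)] assms(3,4) by (metis card_seteq)

lemma full_face_in_facets:
  assumes "bounded_complex d n K" "\<sigma> \<in> K" "card \<sigma> = Suc d"
  shows "\<sigma> \<in> facets K"
proof -
  have "\<forall>\<tau>\<in>K. \<sigma> \<subseteq> \<tau> \<longrightarrow> \<tau> = \<sigma>"
    using bounded_complex_face_eq[OF assms(1) _ _ assms(3)] by blast
  then show ?thesis
    unfolding facets_def using assms(2) by blast
qed

lemma full_face_of_join_simplex:
  assumes "bounded_complex d n K" "\<sigma> \<in> join K (simplex {v})" "card \<sigma> = Suc (Suc d)"
  obtains \<rho> where "\<rho> \<in> K" "\<sigma> = insert v \<rho>" "v \<notin> \<rho>" "card \<rho> = Suc d"
proof -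
  note full = that
  from assms(2) consider "\<sigma> \<in> K" | \<rho> where "\<rho> \<in> K" "\<sigma> = insert v \<rho>"
    unfolding mem_join_simplex by blast
  then show thesis
  proof cases
    case 1
    then show ?thesis
      using bounded_complexD[OF assms(1)] assms(3) by fastforce
  next
    case (2 \<rho>)
    have "finite \<rho>" "card \<rho> \<le> Suc d"
      using bounded_complexD[OF assms(1) 2(1)] by auto
    then have "v \<notin> \<rho>" "card \<rho> = Suc d"
      using assms(3) 2(2) by (auto simp: card_insert_if split: if_splits)
    then show ?thesis
      using full 2 by blast
  qed
qed

lemma Bc_nonempty:
  assumes "\<sigma> \<in> Bc d i n"
  shows "0 \<le> i" "0 < d" "d + 1 \<le> n"
proof -
  have "\<not> (i < 0 \<or> d = 0 \<or> n < d + 1)"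
    using assms Bc_eq_empty by blast
  then show "0 \<le> i" "0 < d" "d + 1 \<le> n"
    by auto
qed

lemma insert_in_Bc:
  assumes "2 \<le> d" "i \<le> int (d div 2)" "\<sigma> \<in> Bc (d - 1) i (n - 1)"
  shows "insert (int n) \<sigma> \<in> Bc d i n"
proof -
  have "0 \<le> i" "d + 1 \<le> n"
    using Bc_nonempty[OF assms(3)] by auto
  with assms show ?thesis
    by (auto simp: Bc_cone mem_join_simplex)
qed

lemma full_face_of_Bc:
  assumes "2 \<le> d" "i \<le> int (d div 2)" "\<sigma> \<in> Bc d i n" "card \<sigma> = Suc d"
  obtains \<rho> where "\<rho> \<in> Bc (d - 1) i (n - 1)" "\<sigma> = insert (int n) \<rho>" "card \<rho> = d"
    | \<rho> where "\<rho> \<in> Bc (d - 1) (i - 1) (n - 1)" "\<sigma> = insert (- int n) (uminus ` \<rho>)" "card \<rho> = d"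
proof -
  note cases = that
  have "0 \<le> i" "d + 1 \<le> n"
    using Bc_nonempty[OF assms(3)] by auto
  have card: "card \<sigma> = Suc (Suc (d - 1))"
    using assms(1,4) by simp
  from assms(3)[unfolded Bc_cone[OF assms(1) \<open>0 \<le> i\<close> assms(2) \<open>d + 1 \<le> n\<close>]] show thesis
  proof (elim UnE)
    assume "\<sigma> \<in> join (Bc (d - 1) i (n - 1)) (simplex {int n})"
    then obtain \<rho> where "\<rho> \<in> Bc (d - 1) i (n - 1)" "\<sigma> = insert (int n) \<rho>" "card \<rho> = Suc (d - 1)"
      by (rule full_face_of_join_simplex[OF bounded_complex_Bc _ card])
    then show thesis
      using cases(1) assms(1) by simp
  next
    assume "\<sigma> \<in> join (negc (Bc (d - 1) (i - 1) (n - 1))) (simplex {- int n})"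
    then obtain \<rho> where "\<rho> \<in> negc (Bc (d - 1) (i - 1) (n - 1))" "\<sigma> = insert (- int n) \<rho>"
      "card \<rho> = Suc (d - 1)"
      by (rule full_face_of_join_simplex[OF bounded_complex_negc[OF bounded_complex_Bc] _ card])
    then show thesis
      using cases(2)[of "uminus ` \<rho>"] assms(1) by (simp add: mem_negc)
  qed
qed

lemma full_face_of_Bc_top:
  assumes "2 \<le> d" "i \<le> int (d div 2)" "\<sigma> \<in> Bc d i n" "card \<sigma> = Suc d"
  shows "\<exists>v\<in>\<sigma>. \<bar>v\<bar> = int n"
  by (rule full_face_of_Bc[OF assms]) auto

lemma full_face_of_Bc_top_two:
  assumes "3 \<le> d" "i \<le> int ((d - 1) div 2)" "\<sigma> \<in> Bc d i n" "card \<sigma> = Suc d"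
  shows "(\<exists>v\<in>\<sigma>. \<bar>v\<bar> = int n) \<and> (\<exists>w\<in>\<sigma>. \<bar>w\<bar> = int n - 1)"
proof (rule full_face_of_Bc[OF _ _ assms(3,4)])
  show "2 \<le> d"
    using assms(1) by simp
  show "i \<le> int (d div 2)"
    using assms(2) div_le_mono[of "d - 1" d 2] by linarith
  have top: "\<exists>w\<in>\<rho>. \<bar>w\<bar> = int n - 1"
    if "\<rho> \<in> Bc (d - 1) j (n - 1)" "card \<rho> = d" "j \<le> i" for \<rho> j
  proof -
    have "int (n - 1) = int n - 1"
      using Bc_nonempty(3)[OF that(1)] by simp
    moreover have "\<exists>w\<in>\<rho>. \<bar>w\<bar> = int (n - 1)"
      using that assms(1,2) by (intro full_face_of_Bc_top[of "d - 1" j]) simp_all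
    ultimately show ?thesis
      by simp
  qed
  show ?thesis if "\<rho> \<in> Bc (d - 1) i (n - 1)" "\<sigma> = insert (int n) \<rho>" "card \<rho> = d" for \<rho>
    using that top[of \<rho> i] by auto
  show ?thesis if "\<rho> \<in> Bc (d - 1) (i - 1) (n - 1)" "\<sigma> = insert (- int n) (uminus ` \<rho>)" "card \<rho> = d"
    for \<rho>
    using that top[of \<rho> "i - 1"] by force
qed

section \<open>Sets with property P\<close>

text \<open>
  \<open>propP_rec j N G\<close>: G is a 2j-set with property P_N, built from its last pair
  {s a, s (a+2)} ({s a, s (a+1)} if j = 1) on top of such a set below a - 1.
  Unlike \<open>propP\<close>, it excludes the empty set.
\<close>
fun propP_rec :: "nat \<Rightarrow> nat \<Rightarrow> int set \<Rightarrow> bool" where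
  "propP_rec 0 N G \<longleftrightarrow> False"
| "propP_rec (Suc 0) N G \<longleftrightarrow>
     (\<exists>a s. (s = 1 \<or> s = -1) \<and> 1 \<le> a \<and> a + 1 \<le> N \<and> G = {s * int a, s * int (a + 1)})"
| "propP_rec (Suc (Suc j)) N G \<longleftrightarrow>
     (\<exists>H a s. (s = 1 \<or> s = -1) \<and> 2 \<le> a \<and> a + 2 \<le> N \<and> propP_rec (Suc j) (a - 1) H
        \<and> G = H \<union> {s * int a, s * int (a + 2)})"

lemma propP_recD:
  "propP_rec j N G \<Longrightarrow> finite G \<and> card G = 2 * j \<and> G \<subseteq> Vn N \<and> 3 * j \<le> N + 1"
proof (induction j N G rule: propP_rec.induct)
  case (2 N G)
  then show ?case
    by (auto simp: Vn_def abs_mult)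
next
  case (3 j N G)
  then obtain H a s where h: "s = 1 \<or> s = -1" "2 \<le> a" "a + 2 \<le> N" "propP_rec (Suc j) (a - 1) H"
    "G = H \<union> {s * int a, s * int (a + 2)}"
    by auto
  have IH: "finite H" "card H = 2 * Suc j" "H \<subseteq> Vn (a - 1)" "3 * Suc j \<le> a"
    using "3.IH"[OF h(4)] h(2) by auto
  have "s * int a \<notin> H" "s * int (a + 2) \<notin> H"
    using notin_Vn[OF IH(3)] h(1,2) by (auto simp: abs_mult)
  moreover have "s * int a \<noteq> s * int (a + 2)"
    using h(1) by auto
  moreover have "{s * int a, s * int (a + 2)} \<subseteq> Vn N" "Vn (a - 1) \<subseteq> Vn N"
    using h(1-3) Vn_mono[of "a - 1" N] unfolding Vn_def by (auto simp: abs_mult)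
  ultimately show ?case
    using IH h(3,5) by (auto simp: card_insert_if)
qed simp

lemma propP_rec_uminus: "propP_rec j N G \<Longrightarrow> propP_rec j N (uminus ` G)"
proof (induction j N G rule: propP_rec.induct)
  case (2 N G)
  then obtain a s where "s = 1 \<or> s = -1" "1 \<le> a" "a + 1 \<le> N" "G = {s * int a, s * int (a + 1)}"
    by auto
  then show ?case
    by (intro propP_rec.simps(2)[THEN iffD2] exI[of _ a] exI[of _ "- s"]) auto
next
  case (3 j N G)
  then obtain H a s where "s = 1 \<or> s = -1" "2 \<le> a" "a + 2 \<le> N" "propP_rec (Suc j) (a - 1) H"
    "G = H \<union> {s * int a, s * int (a + 2)}"
    by auto
  with "3.IH" show ?case
    by (intro propP_rec.simps(3)[THEN iffD2] exI[of _ "uminus ` H"] exI[of _ a] exI[of _ "- s"]) auto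
qed simp

lemma propP_rec_top_gap:
  assumes "propP_rec (Suc (Suc j)) N G" "v \<in> G" "\<bar>v\<bar> = int N" "w \<in> G" "\<bar>w\<bar> = int N - 1"
  shows False
proof -
  obtain H a s where h: "s = 1 \<or> s = -1" "2 \<le> a" "a + 2 \<le> N" "propP_rec (Suc j) (a - 1) H"
    "G = H \<union> {s * int a, s * int (a + 2)}"
    using assms(1) by auto
  have H: "H \<subseteq> Vn (a - 1)"
    using propP_recD[OF h(4)] by blast
  have "v = s * int (a + 2)"
    using assms(2,3) h notin_Vn[OF H, of v] by (auto simp: abs_mult)
  then have "N = a + 2"
    using assms(3) h(1) by (auto simp: abs_mult)
  then show False
    using assms(4,5) h notin_Vn[OF H, of w] by (auto simp: abs_mult)
qed

lemma propP_rec_SucE: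
  assumes "propP_rec (Suc (Suc j)) (Suc N) G"
  obtains "propP_rec (Suc (Suc j)) N G"
    | H where "propP_rec (Suc j) (N - 2) H" "G = insert (int N + 1) (insert (int N - 1) H)"
    | H where "propP_rec (Suc j) (N - 2) H" "G = insert (- (int N + 1)) (insert (- (int N - 1)) H)"
proof -
  note cases = that
  obtain H a s where h: "s = 1 \<or> s = -1" "2 \<le> a" "a + 2 \<le> Suc N" "propP_rec (Suc j) (a - 1) H"
    "G = H \<union> {s * int a, s * int (a + 2)}"
    using assms by auto
  show thesis
  proof (cases "a + 2 \<le> N")
    case True
    then show thesis
      using h cases(1) by auto
  next
    case False
    then have "a - 1 = N - 2" "int a = int N - 1" "int (a + 2) = int N + 1"
      using h(3) by auto
    then have "propP_rec (Suc j) (N - 2) H" "G = insert (s * (int N + 1)) (insert (s * (int N - 1)) H)"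
      using h(4,5) by auto
    with h(1) show thesis
      using cases(2,3) by auto
  qed
qed

lemma signed_pair:
  fixes x y :: int
  assumes "x \<noteq> 0" "sgn x = sgn y" "\<bar>y\<bar> = \<bar>x\<bar> + int c"
  obtains s a where "s = 1 \<or> s = -1" "x = s * int a" "y = s * int (a + c)" "int a = \<bar>x\<bar>"
proof
  show "sgn x = 1 \<or> sgn x = -1"
    using assms(1) by (simp add: sgn_if)
  show "x = sgn x * int (nat \<bar>x\<bar>)" "int (nat \<bar>x\<bar>) = \<bar>x\<bar>"
    by (simp_all add: sgn_mult_abs)
  show "y = sgn x * int (nat \<bar>x\<bar> + c)"
    using assms(2,3) by (metis abs_ge_zero int_nat_eq of_nat_add sgn_mult_abs)
qed

lemma propP_rec_of_seq:
  fixes p :: "nat \<Rightarrow> int"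
  assumes "1 \<le> j" "1 \<le> \<bar>p 1\<bar>" "\<forall>i\<in>{1..<2*j}. \<bar>p i\<bar> < \<bar>p (Suc i)\<bar>" "\<bar>p (2*j)\<bar> \<le> int N"
    "\<forall>i\<in>{1..j}. sgn (p (2*i - 1)) = sgn (p (2*i))" "\<bar>p 2\<bar> - \<bar>p 1\<bar> = 1"
    "\<forall>i\<in>{2..j}. \<bar>p (2*i)\<bar> - \<bar>p (2*i - 1)\<bar> = 2"
  shows "propP_rec j N (p ` {1..2*j})"
  using assms
proof (induction j arbitrary: N rule: nat_induct_at_least)
  case base
  have "p 1 \<noteq> 0" "sgn (p 1) = sgn (p 2)" "\<bar>p 2\<bar> = \<bar>p 1\<bar> + int 1"
    using base.prems by force+
  then obtain s a where sa: "s = 1 \<or> s = -1" "p 1 = s * int a" "p 2 = s * int (a + 1)" "int a = \<bar>p 1\<bar>"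
    by (rule signed_pair)
  have "1 \<le> a" "a + 1 \<le> N"
    using sa base.prems(1,3) by (auto simp: abs_mult)
  then have "propP_rec 1 N {s * int a, s * int (a + 1)}"
    using sa(1) by auto
  moreover have "p ` {1..2*1} = {p 1, p 2}"
    by (auto simp: atLeastAtMost_iff le_Suc_eq numeral_2_eq_2)
  ultimately show ?case
    using sa(2,3) by simp
next
  case (Suc j)
  define a where "a = nat \<bar>p (2*j + 1)\<bar>"
  have "\<bar>p (2*j)\<bar> < \<bar>p (2*j + 1)\<bar>"
    using Suc.prems(2) Suc.hyps by auto
  then have IH: "propP_rec j (a - 1) (p ` {1..2*j})"
    using Suc.prems unfolding a_def by (intro Suc.IH) auto
  with Suc.hyps have "2 \<le> a"
    using propP_recD[OF IH] by linarith
  have "p (2*j + 1) \<noteq> 0" "sgn (p (2*j + 1)) = sgn (p (2*j + 2))"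
    "\<bar>p (2*j + 2)\<bar> = \<bar>p (2*j + 1)\<bar> + int 2"
    using \<open>2 \<le> a\<close> bspec[OF Suc.prems(4), of "Suc j"] bspec[OF Suc.prems(6), of "Suc j"] Suc.hyps
    unfolding a_def by auto
  then obtain s b where sb: "s = 1 \<or> s = -1" "p (2*j + 1) = s * int b" "p (2*j + 2) = s * int (b + 2)"
    "int b = \<bar>p (2*j + 1)\<bar>"
    by (rule signed_pair)
  have "b = a" "a + 2 \<le> N"
    using sb Suc.prems(3) unfolding a_def by (auto simp: abs_mult)
  obtain j' where "j = Suc j'"
    using Suc.hyps by (cases j) auto
  then have "propP_rec (Suc j) N (p ` {1..2*j} \<union> {s * int a, s * int (a + 2)})"
    using IH sb(1) \<open>2 \<le> a\<close> \<open>a + 2 \<le> N\<close> by auto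
  moreover have "{1..2 * Suc j} = {1..2*j} \<union> {2*j + 1, 2*j + 2}"
    by auto
  ultimately show ?case
    using sb(2,3) \<open>b = a\<close> by simp
qed

lemma propP_rec_if_propP:
  assumes "propP N G" "G \<noteq> {}"
  obtains j where "propP_rec j N G"
proof -
  obtain j p where p: "G = p ` {1..2*j}" "1 \<le> \<bar>p 1\<bar>" "\<forall>i\<in>{1..<2*j}. \<bar>p i\<bar> < \<bar>p (Suc i)\<bar>"
    "\<bar>p (2*j)\<bar> \<le> int N" "\<forall>i\<in>{1..j}. sgn (p (2*i - 1)) = sgn (p (2*i))"
    "\<bar>p 2\<bar> - \<bar>p 1\<bar> = 1" "\<forall>i\<in>{2..j}. \<bar>p (2*i)\<bar> - \<bar>p (2*i - 1)\<bar> = 2"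
    using assms(1) unfolding propP_def by blast
  have "j \<noteq> 0"
    using p(1) assms(2) by auto
  then show thesis
    using that propP_rec_of_seq[of j p N] p by simp
qed

section \<open>P-sets in \<Delta> and B\<close>

lemma propP_rec_below_top:
  assumes "propP_rec (Suc j) (N - 2) H"
  shows "4 \<le> N" "finite H" "card H = 2*j + 2"
    and "int N \<notin> H" "int N - 1 \<notin> H" "- int N \<notin> H" "- (int N - 1) \<notin> H"
proof -
  have H: "finite H" "card H = 2*j + 2" "H \<subseteq> Vn (N - 2)" "3 * Suc j \<le> N - 2 + 1"
    using propP_recD[OF assms] by auto
  then show "4 \<le> N" "finite H" "card H = 2*j + 2"
    by auto
  show "int N \<notin> H" "int N - 1 \<notin> H" "- int N \<notin> H" "- (int N - 1) \<notin> H"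
    using notin_Vn[OF H(3)] \<open>4 \<le> N\<close> by auto
qed

lemma propP_rec_not_in_Bc:
  assumes "propP_rec (Suc j) M G" "i \<le> int j"
  shows "G \<notin> Bc (2*j + 1) i M"
proof (cases j)
  case 0
  then obtain a s where h: "s = 1 \<or> s = -1" "1 \<le> a" "a + 1 \<le> M" "G = {s * int a, s * int (a + 1)}"
    using assms(1) by auto
  show ?thesis
  proof (cases "i < 0")
    case True
    then show ?thesis by (simp add: Bc_eq_empty)
  next
    case False
    then have "Bc (2*j + 1) i M = simplex {-1, int M}"
      using assms(2) 0 h(2,3) Bc_1_0[of M] by simp
    then show ?thesis
      using h unfolding simplex_def by auto
  qed
next
  case (Suc j')
  show ?thesis
  proof
    assume "G \<in> Bc (2*j + 1) i M"
    moreover have "card G = Suc (2*j + 1)"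
      using propP_recD[OF assms(1)] by simp
    ultimately obtain v w where "v \<in> G" "\<bar>v\<bar> = int M" "w \<in> G" "\<bar>w\<bar> = int M - 1"
      using full_face_of_Bc_top_two[of "2*j + 1" i G M] assms(2) Suc by auto
    then show False
      using propP_rec_top_gap assms(1) Suc by blast
  qed
qed

lemma propP_rec_in_Bc_upper:
  assumes "propP_rec (Suc j) M G" "G \<in> Delta (2*j + 1) M"
  shows "G \<in> Bc (2*j + 1) (int j + 1) M"
proof -
  have G: "card G = Suc (2*j + 1)" "3 * Suc j \<le> M + 1"
    using propP_recD[OF assms(1)] by auto
  have "G \<in> facets (Delta (2*j + 1) M)"
    by (rule full_face_in_facets[OF bounded_complex_Delta assms(2) G(1)])
  moreover have "G \<notin> facets (Bc (2*j + 1) (int j) M)"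
    using propP_rec_not_in_Bc[OF assms(1)] facets_subset by blast
  ultimately have "G \<in> facets (diffc (Delta (2*j + 1) M) (Bc (2*j + 1) (int j) M))"
    by (rule facet_diffc)
  then show ?thesis
    using Bc_odd_top[of "2*j + 1" "int j + 1" M] G(2) facets_subset by auto
qed

lemma propP_rec_cone_in_Bc:
  assumes "propP_rec (Suc j) (N - 2) H" "H \<in> Delta (2*j + 1) (N - 2)"
  shows "insert (int N) (insert (int N - 1) H) \<in> Bc (2*j + 3) (int j + 1) N"
proof -
  have "4 \<le> N"
    by (rule propP_rec_below_top(1)[OF assms(1)])
  have "H \<in> Bc (2*j + 1) (int j + 1) (N - 1 - 1)"
    using propP_rec_in_Bc_upper[OF assms] by (simp add: numeral_2_eq_2)
  then have "insert (int (N - 1)) H \<in> Bc (2*j + 2) (int j + 1) (N - 1)"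
    using insert_in_Bc[of "2*j + 2" "int j + 1" H "N - 1"] by simp
  then have "insert (int N) (insert (int (N - 1)) H) \<in> Bc (2*j + 3) (int j + 1) N"
    using insert_in_Bc[of "2*j + 3" "int j + 1" _ N] by simp
  then show ?thesis
    using \<open>4 \<le> N\<close> by (simp add: of_nat_diff)
qed

lemma propP_rec_neg_ridge_notin_Bc:
  assumes "propP_rec (Suc j) (N - 2) H"
  shows "insert (- (int N - 1)) H \<notin> Bc (2*j + 2) (int j) (N - 1)"
proof
  note H = propP_rec_below_top[OF assms]
  assume \<sigma>: "insert (- (int N - 1)) H \<in> Bc (2*j + 2) (int j) (N - 1)"
  have "card (insert (- (int N - 1)) H) = Suc (2*j + 2)"
    using H by simp
  then show False
  proof (rule full_face_of_Bc[of "2*j + 2" "int j", OF _ _ \<sigma>, rotated 2])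
    fix \<rho> assume "insert (- (int N - 1)) H = insert (int (N - 1)) \<rho>"
    then have "int N - 1 \<in> insert (- (int N - 1)) H"
      using H(1) by (simp add: of_nat_diff)
    then show False
      using H by auto
  next
    fix \<rho> assume \<rho>: "\<rho> \<in> Bc (2*j + 2 - 1) (int j - 1) (N - 1 - 1)"
      "insert (- (int N - 1)) H = insert (- int (N - 1)) (uminus ` \<rho>)"
    have "uminus ` \<rho> \<subseteq> Vn (N - 2)"
      using bounded_complexD[OF bounded_complex_Bc \<rho>(1)] by (simp add: numeral_2_eq_2)
    then have "- (int N - 1) \<notin> uminus ` \<rho>"
      using H(1) by (intro notin_Vn) auto
    then have "H = uminus ` \<rho>"
      using \<rho>(2) H(7) H(1) by (simp add: of_nat_diff insert_ident)
    then have "uminus ` H \<in> Bc (2*j + 1) (int j - 1) (N - 2)"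
      using \<rho>(1) by (simp add: numeral_2_eq_2)
    then show False
      using propP_rec_not_in_Bc[OF propP_rec_uminus[OF assms], of "int j - 1"] by simp
  qed simp_all
qed

lemma Bc_facet_through_ridge:
  assumes "propP_rec (Suc j) (N - 2) H" "F \<in> Bc (2*j + 3) (int j + 1) N"
    and "insert (int N - 1) H \<subseteq> F" "card F = 2*j + 4"
  shows "F = insert (int N) (insert (int N - 1) H)"
proof -
  note H = propP_rec_below_top[OF assms(1)]
  have d: "2 \<le> 2*j + 3" "int j + 1 \<le> int ((2*j + 3) div 2)"
    by auto
  show ?thesis
  proof (rule full_face_of_Bc[OF d assms(2)])
    show "card F = Suc (2*j + 3)"
      using assms(4) by simp
  next
    fix \<rho> assume \<rho>: "\<rho> \<in> Bc (2*j + 3 - 1) (int j + 1) (N - 1)" "F = insert (int N) \<rho>"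
    have "insert (int N - 1) H \<subseteq> \<rho>"
      using assms(3) \<rho>(2) H(4) by auto
    moreover have "card (insert (int N - 1) H) = Suc (2*j + 2)"
      using H by simp
    ultimately have "\<rho> = insert (int N - 1) H"
      using \<rho>(1) by (intro bounded_complex_face_eq[OF bounded_complex_Bc]) simp_all
    then show ?thesis
      using \<rho>(2) by simp
  next
    fix \<rho> assume \<rho>: "\<rho> \<in> Bc (2*j + 3 - 1) (int j + 1 - 1) (N - 1)" "F = insert (- int N) (uminus ` \<rho>)"
    have "insert (int N - 1) H \<subseteq> uminus ` \<rho>"
      using assms(3) \<rho>(2) H(1,6) by auto
    then have "insert (- (int N - 1)) (uminus ` H) \<subseteq> \<rho>"
      using uminus_image_subset_swap[of "insert (int N - 1) H" \<rho>] by simp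
    moreover have "- (int N - 1) \<notin> uminus ` H"
      using H(5) by (simp only: inj_image_mem_iff[OF inj_uminus] not_False_eq_True)
    then have "card (insert (- (int N - 1)) (uminus ` H)) = Suc (2*j + 2)"
      using H(2,3) by simp
    ultimately have "\<rho> = insert (- (int N - 1)) (uminus ` H)"
      using \<rho>(1) by (intro bounded_complex_face_eq[OF bounded_complex_Bc]) simp_all
    then show ?thesis
      using \<rho>(1) propP_rec_neg_ridge_notin_Bc[OF propP_rec_uminus[OF assms(1)]] by simp
  qed
qed

lemma ridge_in_bd_Bc:
  assumes "propP_rec (Suc j) (N - 2) H" "H \<in> Delta (2*j + 1) (N - 2)"
  shows "insert (int N - 1) H \<in> bd (Bc (2*j + 3) (int j + 1) N)"
proof (rule ridge_in_bd[where X = "insert (int N) (insert (int N - 1) H)"])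
  note H = propP_rec_below_top[OF assms(1)]
  have card: "card (insert (int N) (insert (int N - 1) H)) = Suc (2*j + 3)"
    using H by simp
  show "insert (int N) (insert (int N - 1) H) \<in> facets (Bc (2*j + 3) (int j + 1) N)"
    by (rule full_face_in_facets[OF bounded_complex_Bc propP_rec_cone_in_Bc[OF assms] card])
  show "insert (int N - 1) H \<subseteq> insert (int N) (insert (int N - 1) H)"
    by blast
  show "card (insert (int N) (insert (int N - 1) H)) = card (insert (int N - 1) H) + 1"
    using H by simp
  show "F = insert (int N) (insert (int N - 1) H)"
    if "F \<in> facets (Bc (2*j + 3) (int j + 1) N)" "insert (int N - 1) H \<subseteq> F"
      "card F = card (insert (int N - 1) H) + 1" for F
    using that H facets_subset by (intro Bc_facet_through_ridge[OF assms(1)]) auto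
qed

lemma propP_rec_1_in_Delta:
  assumes "propP_rec 1 N G"
  shows "G \<in> Delta 1 N"
proof -
  obtain a s where h: "s = 1 \<or> s = -1" "1 \<le> a" "a + 1 \<le> N" "G = {s * int a, s * int (a + 1)}"
    using assms by auto
  have "s * int a = int a \<and> s * int (a + 1) = int a + 1 \<or> s * int a = - int a \<and> s * int (a + 1) = - int a - 1"
    using h(1) by auto
  then consider "G = {int a, int a + 1}" | "G = {- int a, - int a - 1}"
    unfolding h(4) by (elim disjE conjE) simp_all
  then have "G \<in> {{int i, int i + 1} | i. 1 \<le> i \<and> i < N} \<union> {{- int i, - int i - 1} | i. 1 \<le> i \<and> i < N}"
  proof cases
    case 1
    have "G \<in> {{int i, int i + 1} | i. 1 \<le> i \<and> i < N}"
      unfolding mem_Collect_eq using 1 h(2,3) by (intro exI[of _ a]) simp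
    then show ?thesis by (rule UnI1)
  next
    case 2
    have "G \<in> {{- int i, - int i - 1} | i. 1 \<le> i \<and> i < N}"
      unfolding mem_Collect_eq using 2 h(2,3) by (intro exI[of _ a]) simp
    then show ?thesis by (rule UnI2)
  qed
  then have "G \<in> cycle N"
    unfolding cycle_def by (rule subsetD[OF subset_generated UnI1])
  then show ?thesis
    using Delta_1 h(2,3) by simp
qed

lemma propP_rec_in_Delta_Suc:
  assumes IH_j: "\<And>N H. propP_rec (Suc j) N H \<Longrightarrow> H \<in> Delta (2*j + 1) N"
    and IH_N: "\<And>G. propP_rec (Suc (Suc j)) N G \<Longrightarrow> G \<in> Delta (2*j + 3) N"
    and G: "propP_rec (Suc (Suc j)) (Suc N) G"
  shows "G \<in> Delta (2*j + 3) (Suc N)"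
proof -
  define B where "B = Bc (2*j + 3) (int j + 1) N"
  have "2*j + 4 \<le> N"
    using propP_recD[OF G] by simp
  then have Delta_eq: "Delta (2*j + 3) (Suc N) = replace (Delta (2*j + 3) N) B N"
    unfolding B_def using Delta_replace[of "2*j + 3" "Suc N"] by (simp add: add.commute)
  from G show ?thesis
  proof (cases rule: propP_rec_SucE)
    case 1
    have eqs: "2 * Suc j + 1 = 2*j + 3" "int (Suc j) = int j + 1"
      by simp_all
    have "G \<notin> B" "uminus ` G \<notin> B"
      unfolding B_def
      using propP_rec_not_in_Bc[OF 1 order_refl, unfolded eqs]
        propP_rec_not_in_Bc[OF propP_rec_uminus[OF 1] order_refl, unfolded eqs] .
    moreover have "G \<in> facets (Delta (2*j + 3) N)"
      using IH_N[OF 1] propP_recD[OF 1]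
      by (intro full_face_in_facets[OF bounded_complex_Delta]) simp_all
    ultimately show ?thesis
      unfolding Delta_eq by (intro facet_in_replace)
  next
    case (2 H)
    have "insert (int N - 1) H \<in> bd B"
      unfolding B_def by (rule ridge_in_bd_Bc[OF 2(1) IH_j[OF 2(1)]])
    then show ?thesis
      unfolding Delta_eq 2(2) by (rule cone_in_replace)
  next
    case (3 H)
    have "insert (int N - 1) (uminus ` H) \<in> bd B"
      unfolding B_def
      by (rule ridge_in_bd_Bc[OF propP_rec_uminus[OF 3(1)] IH_j[OF propP_rec_uminus[OF 3(1)]]])
    then have "uminus ` insert (- (int N - 1)) H \<in> bd B"
      by simp
    then show ?thesis
      unfolding Delta_eq 3(2) by (rule neg_cone_in_replace)
  qed
qed

lemma propP_rec_in_Delta: "propP_rec (Suc j) N G \<Longrightarrow> G \<in> Delta (2*j + 1) N"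
proof (induction j arbitrary: N G)
  case 0
  then show ?case
    using propP_rec_1_in_Delta by simp
next
  case (Suc j)
  note IH_j = Suc.IH
  have "G \<in> Delta (2*j + 3) N"
    using Suc.prems
  proof (induction N arbitrary: G)
    case 0
    then show ?case
      using propP_recD by fastforce
  next
    case (Suc N)
    show ?case
      by (rule propP_rec_in_Delta_Suc[OF IH_j Suc.IH Suc.prems])
  qed
  moreover have "2 * Suc j + 1 = 2*j + 3"
    by simp
  ultimately show ?case
    by (simp only:)
qed

lemma propP_rec_top_cone_facet:
  assumes "propP_rec (Suc j) (n - 3) G"
  shows "insert (int n) (insert (int n - 1) (insert (int n - 2) G)) \<in> facets (Bc (2*j + 4) (int j + 1) n)"
proof -
  have G: "finite G" "card G = 2*j + 2" "G \<subseteq> Vn (n - 3)" "3 * Suc j \<le> n - 3 + 1"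
    using propP_recD[OF assms] by auto
  then have "5 \<le> n"
    by simp
  have n: "n - 2 - 1 = n - 3" "n - 1 - 1 = n - 2"
    "2*j + 2 - 1 = 2*j + 1" "2*j + 3 - 1 = 2*j + 2" "2*j + 4 - 1 = 2*j + 3"
    by simp_all
  have "G \<in> Bc (2*j + 1) (int j + 1) (n - 3)"
    by (rule propP_rec_in_Bc_upper[OF assms propP_rec_in_Delta[OF assms]])
  then have "insert (int (n - 2)) G \<in> Bc (2*j + 2) (int j + 1) (n - 2)"
    using insert_in_Bc[of "2*j + 2" "int j + 1" G "n - 2", unfolded n] by simp
  then have "insert (int (n - 1)) (insert (int (n - 2)) G) \<in> Bc (2*j + 3) (int j + 1) (n - 1)"
    using insert_in_Bc[of "2*j + 3" "int j + 1" "insert (int (n - 2)) G" "n - 1", unfolded n] by simp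
  then have "insert (int n) (insert (int (n - 1)) (insert (int (n - 2)) G)) \<in> Bc (2*j + 4) (int j + 1) n"
    using insert_in_Bc[of "2*j + 4" "int j + 1" "insert (int (n - 1)) (insert (int (n - 2)) G)" n, unfolded n]
    by simp
  moreover have "card (insert (int n) (insert (int (n - 1)) (insert (int (n - 2)) G))) = Suc (2*j + 4)"
    using G \<open>5 \<le> n\<close> notin_Vn[OF G(3)] by simp
  ultimately show ?thesis
    using full_face_in_facets[OF bounded_complex_Bc] \<open>5 \<le> n\<close> by (simp add: of_nat_diff)
qed

theorem mainTheorem7:
  fixes k n :: nat and G :: "int set"
  assumes "k \<ge> 2"
    and "G \<subseteq> Vn (n - 3)"
    and "card G = 2*k - 2"
    and "propP (n - 3) G"
  shows "G \<union> {int n - 2, int n - 1, int n} \<in> facets (Bc (2*k) (int k - 1) n)"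
proof -
  have "G \<noteq> {}"
    using assms(1,3) by auto
  with assms(4) obtain j where P: "propP_rec j (n - 3) G"
    by (rule propP_rec_if_propP)
  have "j = Suc (k - 2)"
    using propP_recD[OF P] assms(1,3) by linarith
  then have "insert (int n) (insert (int n - 1) (insert (int n - 2) G))
      \<in> facets (Bc (2 * (k - 2) + 4) (int (k - 2) + 1) n)"
    using propP_rec_top_cone_facet P by simp
  moreover have "2 * (k - 2) + 4 = 2 * k" "int (k - 2) + 1 = int k - 1"
    using assms(1) by auto
  ultimately show ?thesis
    by (simp add: insert_commute)
qed

end
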